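(* Let $G$ be a graph, $\ell\ge 1$, and let $B\subseteq V(G)$ be a mixed $(\ell-1)$-leaky forcing set of $G$. Let $L=L_1\cup L_2\cup L_3$ be a set of $k\ge\ell$ leaks, where $L_1$ is the set of vertex leaks, $L_2$ the set of edge leaks and $L_3$ the set of specified leaks in $L$. Then \[|L_1\setminus B^{[\infty]}_L|+|L_2-B^{[\infty]}_L|+|L_3-B^{[\infty]}_L|\le k-\ell,\] where for $S\subseteq V(G)$, $L_2-S=\{xy\in L_2: x\notin S,\ y\notin S\}$ and $L_3-S=\{x\to y\in L_3: x\notin S\}$.
   Context: All graphs are finite, simple and undirected. Zero forcing: a blue vertex $u$ with exactly one white neighbor $w$ may force $w$ (color it blue), written $u\to w$. A vertex leak is a vertex not allowed to perform any force. An edge leak is an edge $xy$ across which no force may be performed (neither $x\to y$ nor $y\to x$). A specified leak is an ordered pair $x\to y$ meaning $x$ (the tail) may not force $y$ (the head). A leak is any of these three kinds. $B$ is a mixed $\ell$-leaky forcing set if for every set of at most $\ell$ leaks (of any mix of kinds), exhaustively applying the forcing rule from initial blue set $B$ subject to all the leaks colors all of $V(G)$ blue. For a set $L$ of leaks, $B^{[\infty]}_L$ denotes the set of blue vertices obtained from $B$ after exhaustively applying the forcing rule subject to the leaks in $L$ (independent of the order of forces). *)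

theory Defs
  imports Main
begin

definition simple_graph :: "'a set \<Rightarrow> ('a \<Rightarrow> 'a \<Rightarrow> bool) \<Rightarrow> bool" where
  "simple_graph V E \<longleftrightarrow> finite V \<and>
     (\<forall>x y. E x y \<longrightarrow> x \<in> V \<and> y \<in> V \<and> x \<noteq> y \<and> E y x)"

text \<open>Leaks: a vertex leak, an edge leak (an unordered edge, as a 2-element set),
  or a specified leak x \<rightarrow> y (x may not force y).\<close>
datatype 'a leak = VLeak 'a | ELeak "'a set" | SLeak 'a 'a

definition valid_leak :: "'a set \<Rightarrow> ('a \<Rightarrow> 'a \<Rightarrow> bool) \<Rightarrow> 'a leak \<Rightarrow> bool" where
  "valid_leak V E lk = (case lk of
      VLeak v \<Rightarrow> v \<in> V
    | ELeak e \<Rightarrow> (\<exists>x y. e = {x, y} \<and> E x y)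
    | SLeak x y \<Rightarrow> E x y)"

definition force_allowed :: "'a leak set \<Rightarrow> 'a \<Rightarrow> 'a \<Rightarrow> bool" where
  "force_allowed L u w \<longleftrightarrow>
     VLeak u \<notin> L \<and> ELeak {u, w} \<notin> L \<and> SLeak u w \<notin> L"

inductive_set closure :: "'a set \<Rightarrow> ('a \<Rightarrow> 'a \<Rightarrow> bool) \<Rightarrow> 'a leak set \<Rightarrow> 'a set \<Rightarrow> 'a set"
  for V E L B where
  base: "b \<in> B \<Longrightarrow> b \<in> closure V E L B"
| force: "\<lbrakk> u \<in> closure V E L B; E u w; force_allowed L u w;
            \<And>z. E u z \<Longrightarrow> z \<noteq> w \<Longrightarrow> z \<in> closure V E L B \<rbrakk>
          \<Longrightarrow> w \<in> closure V E L B"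

definition mixed_leaky_forcing_set ::
  "'a set \<Rightarrow> ('a \<Rightarrow> 'a \<Rightarrow> bool) \<Rightarrow> nat \<Rightarrow> 'a set \<Rightarrow> bool" where
  "mixed_leaky_forcing_set V E l B \<longleftrightarrow> B \<subseteq> V \<and>
     (\<forall>L. finite L \<and> card L \<le> l \<and> (\<forall>lk\<in>L. valid_leak V E lk) \<longrightarrow> closure V E L B = V)"

definition vertex_leaks_outside :: "'a leak set \<Rightarrow> 'a set \<Rightarrow> 'a set" where
  "vertex_leaks_outside L S = {v. VLeak v \<in> L} - S"

definition edge_leaks_outside :: "'a leak set \<Rightarrow> 'a set \<Rightarrow> 'a set set" where
  "edge_leaks_outside L S = {e. ELeak e \<in> L \<and> e \<inter> S = {}}"

definition spec_leaks_outside :: "'a leak set \<Rightarrow> 'a set \<Rightarrow> ('a \<times> 'a) set" where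
  "spec_leaks_outside L S = {(x, y). SLeak x y \<in> L \<and> x \<notin> S}"

end

theory Submission
  imports Defs
begin

text \<open>
  A leak whose tail (for a vertex or specified leak) or both of whose endpoints (for an edge leak)
  lie outside the final blue set C never obstructs any force, since every force is performed by a
  vertex of C. Removing these inert leaks therefore leaves a leak set whose final blue set is still
  contained in C. If fewer than l leaks remained, the (l - 1)-leaky forcing property would make that
  set all of V, hence C = V; but then no valid leak is inert, and L itself would have fewer than
  l \<le> k leaks. So at least l leaks are not inert, i.e. at most k - l are.
\<close>

definition leaks_outside :: "'a leak set \<Rightarrow> 'a set \<Rightarrow> 'a leak set" where
  "leaks_outside L S = {lk \<in> L. case lk of
       VLeak v \<Rightarrow> v \<notin> S
     | ELeak e \<Rightarrow> e \<inter> S = {}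
     | SLeak x y \<Rightarrow> x \<notin> S}"

lemma leaks_outside_subset: "leaks_outside L S \<subseteq> L"
  unfolding leaks_outside_def by auto

lemma leaks_outside_eq_Un:
  "leaks_outside L S = VLeak ` vertex_leaks_outside L S \<union> ELeak ` edge_leaks_outside L S
     \<union> (\<lambda>(x, y). SLeak x y) ` spec_leaks_outside L S"
  unfolding leaks_outside_def vertex_leaks_outside_def edge_leaks_outside_def
    spec_leaks_outside_def
  by (rule set_eqI) (case_tac x; auto)

lemma card_leaks_outside:
  assumes "finite L"
  shows "card (leaks_outside L S) = card (vertex_leaks_outside L S)
           + card (edge_leaks_outside L S) + card (spec_leaks_outside L S)"
proof -
  let ?V = "VLeak ` vertex_leaks_outside L S"
  let ?E = "ELeak ` edge_leaks_outside L S"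
  let ?S = "(\<lambda>(x, y). SLeak x y) ` spec_leaks_outside L S"
  have "finite (leaks_outside L S)"
    using assms leaks_outside_subset by (rule finite_subset[rotated])
  then have fin: "finite ?V" "finite ?E" "finite ?S"
    unfolding leaks_outside_eq_Un by auto
  have "card (?V \<union> ?E) = card ?V + card ?E"
    using fin by (intro card_Un_disjoint) auto
  moreover have "card (leaks_outside L S) = card (?V \<union> ?E) + card ?S"
    unfolding leaks_outside_eq_Un using fin by (intro card_Un_disjoint) auto
  ultimately have "card (leaks_outside L S) = card ?V + card ?E + card ?S"
    by simp
  also have "\<dots> = card (vertex_leaks_outside L S)
           + card (edge_leaks_outside L S) + card (spec_leaks_outside L S)"
    by (simp add: card_image inj_on_def split_paired_all)
  finally show ?thesis .
qed

lemma closure_Diff_leaks_outside_subset: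
  "closure V E (L - leaks_outside L (closure V E L B)) B \<subseteq> closure V E L B"
proof
  fix x
  assume "x \<in> closure V E (L - leaks_outside L (closure V E L B)) B"
  then show "x \<in> closure V E L B"
  proof (induction rule: closure.induct)
    case (base b)
    then show ?case by (rule closure.base)
  next
    case (force u w)
    have "force_allowed L u w"
      using force.hyps(3) force.IH(1)
      unfolding force_allowed_def leaks_outside_def by simp
    then show ?case
      using closure.force[OF force.IH(1) force.hyps(2)] force.IH(2) by blast
  qed
qed

lemma leaks_outside_eq_empty:
  assumes "simple_graph V E" and "\<forall>lk\<in>L. valid_leak V E lk" and "V \<subseteq> S"
  shows "leaks_outside L S = {}"
proof -
  have tail: "\<And>x y. E x y \<Longrightarrow> x \<in> S"
    using assms(1,3) unfolding simple_graph_def by blast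
  have "\<not> (case lk of VLeak v \<Rightarrow> v \<notin> S | ELeak e \<Rightarrow> e \<inter> S = {} | SLeak x y \<Rightarrow> x \<notin> S)"
    if "lk \<in> L" for lk
    using assms(2,3) that tail unfolding valid_leak_def by (cases lk) fastforce+
  then show ?thesis
    unfolding leaks_outside_def by blast
qed

lemma mixed_leaky_forcing_setD:
  assumes "mixed_leaky_forcing_set V E l B"
    and "finite L" and "card L \<le> l" and "\<forall>lk\<in>L. valid_leak V E lk"
  shows "closure V E L B = V"
  using assms by (simp add: mixed_leaky_forcing_set_def)

lemma card_not_outside_closure_ge:
  assumes "simple_graph V E" and "l \<ge> 1"
    and "mixed_leaky_forcing_set V E (l - 1) B"
    and "finite L" and "\<forall>lk\<in>L. valid_leak V E lk" and "card L \<ge> l"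
  shows "card (L - leaks_outside L (closure V E L B)) \<ge> l"
proof (rule ccontr)
  let ?C = "closure V E L B"
  let ?L' = "L - leaks_outside L ?C"
  assume "\<not> card ?L' \<ge> l"
  then have few: "card ?L' \<le> l - 1" by simp
  have "finite ?L'" and "\<forall>lk\<in>?L'. valid_leak V E lk"
    using assms(4,5) by auto
  with few have "closure V E ?L' B = V"
    by (intro mixed_leaky_forcing_setD[OF assms(3)])
  then have "V \<subseteq> ?C"
    using closure_Diff_leaks_outside_subset[of V E L B] by simp
  then have "?L' = L"
    using leaks_outside_eq_empty[OF assms(1,5)] by simp
  with few assms(2,6) show False by simp
qed

theorem lemma4p1:
  fixes V :: "'a set" and E :: "'a \<Rightarrow> 'a \<Rightarrow> bool" and B :: "'a set"
    and L :: "'a leak set" and l k :: nat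
  assumes "simple_graph V E"
    and "l \<ge> 1"
    and "mixed_leaky_forcing_set V E (l - 1) B"
    and "finite L" and "\<forall>lk\<in>L. valid_leak V E lk"
    and "card L = k" and "k \<ge> l"
  shows "card (vertex_leaks_outside L (closure V E L B))
       + card (edge_leaks_outside L (closure V E L B))
       + card (spec_leaks_outside L (closure V E L B)) \<le> k - l"
proof -
  let ?O = "leaks_outside L (closure V E L B)"
  have "card (L - ?O) \<ge> l"
    using card_not_outside_closure_ge[OF assms(1-5)] assms(6,7) by simp
  moreover have "card (L - ?O) = k - card ?O"
    using assms(4,6) leaks_outside_subset by (metis card_Diff_subset finite_subset)
  moreover have "card ?O \<le> k"
    using assms(4,6) leaks_outside_subset by (metis card_mono)
  ultimately have "card ?O \<le> k - l" by linarith
  then show ?thesis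
    using card_leaks_outside[OF assms(4)] by simp
qed

end
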